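(* Let $\odot$ be a non-degenerate pseudo-multiplication and let $\phi$ be the supremum of the set of $\odot$-finite elements of $[0,\infty]$. Let $\tau$ be a $\sigma$-maxitive measure on a $\sigma$-algebra $\mathcal{B}$ on a nonempty set $E$ having the Radon–Nikodym property with respect to the idempotent $\odot$-integral. Then $\tau(E)\le\phi$.
   Context: Write $\overline{\mathbb{R}}_+=[0,\infty]$. A pseudo-multiplication is a binary operation $\odot$ on $\overline{\mathbb{R}}_+$ with the following properties: - it is associative; - it is continuous on $(0,\infty)\times[0,\infty]$; - for every $t$, the map $s\mapsto s\odot t$ is continuous on $(0,\infty]$; - it is nondecreasing in each argument; - it has a left identity $1_\odot$, i.e. $1_\odot\odot t=t$ for all $t$; - it has no zero divisors, i.e. $s\odot t=0$ implies $s=0$ or $t=0$; - $0\odot t=t\odot 0=0$ for all $t$. Put $O(t)=\inf_{s>0}s\odot t$. An element $t$ is $\odot$-finite if $O(t)=0$, and $\odot$-infinite otherwise. The operation $\odot$ is non-degenerate if $1_\odot$ is $\odot$-finite. A $\sigma$-maxitive measure on $\mathcal{B}$ is a map $\nu:\mathcal{B}\to\overline{\mathbb{R}}_+$ with $\nu(\emptyset)=0$ and $\nu(\bigcup_j B_j)=\sup_j\nu(B_j)$ for every countable family. A map $f:E\to\overline{\mathbb{R}}_+$ is $\mathcal{B}$-measurable if $\{f>t\}\in\mathcal{B}$ for all $t\in[0,\infty)$. The idempotent $\odot$-integral is $\int^\infty_B f\odot d\tau=\sup_{t\in[0,\infty)}t\odot\tau(B\cap\{f>t\})$. $\nu\ll_\odot\tau$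 means $\nu(B)\le\infty\odot\tau(B)$ for every $B\in\mathcal{B}$ with $\tau(B)$ $\odot$-finite. $\tau$ has the Radon–Nikodym property if every $\sigma$-maxitive $\nu\ll_\odot\tau$ admits a $\mathcal{B}$-measurable $c:E\to\overline{\mathbb{R}}_+$ with $\nu(B)=\int^\infty_B c\odot d\tau$ for all $B\in\mathcal{B}$. *)

theory Defs
  imports "HOL-Analysis.Analysis"
begin

text \<open>The extended half-line [0,\<infinity>] is modelled by the type ennreal.
  A pseudo-multiplication is given by the operation p together with a chosen
  left identity e (the element 1 of the paper).\<close>

definition pseudo_mult :: "(ennreal \<Rightarrow> ennreal \<Rightarrow> ennreal) \<Rightarrow> ennreal \<Rightarrow> bool" where
  "pseudo_mult p e \<longleftrightarrow>
     (\<forall>a b c. p (p a b) c = p a (p b c)) \<and>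
     continuous_on ({0<..<\<infinity>} \<times> UNIV) (\<lambda>(s, t). p s t) \<and>
     (\<forall>t. continuous_on {0<..} (\<lambda>s. p s t)) \<and>
     (\<forall>s s' t. s \<le> s' \<longrightarrow> p s t \<le> p s' t) \<and>
     (\<forall>s t t'. t \<le> t' \<longrightarrow> p s t \<le> p s t') \<and>
     (\<forall>t. p e t = t) \<and>
     (\<forall>s t. p s t = 0 \<longrightarrow> s = 0 \<or> t = 0) \<and>
     (\<forall>t. p 0 t = 0 \<and> p t 0 = 0)"

definition pm_O :: "(ennreal \<Rightarrow> ennreal \<Rightarrow> ennreal) \<Rightarrow> ennreal \<Rightarrow> ennreal" where
  "pm_O p t = (INF s\<in>{0<..}. p s t)"

definition pm_finite :: "(ennreal \<Rightarrow> ennreal \<Rightarrow> ennreal) \<Rightarrow> ennreal \<Rightarrow> bool" where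
  "pm_finite p t \<longleftrightarrow> pm_O p t = 0"

definition non_degenerate :: "(ennreal \<Rightarrow> ennreal \<Rightarrow> ennreal) \<Rightarrow> ennreal \<Rightarrow> bool" where
  "non_degenerate p e \<longleftrightarrow> pm_finite p e"

definition sigma_maxitive :: "'a set \<Rightarrow> 'a set set \<Rightarrow> ('a set \<Rightarrow> ennreal) \<Rightarrow> bool" where
  "sigma_maxitive E B \<nu> \<longleftrightarrow> \<nu> {} = 0 \<and>
     (\<forall>F :: nat \<Rightarrow> 'a set. range F \<subseteq> B \<longrightarrow> \<nu> (\<Union>j. F j) = (SUP j. \<nu> (F j)))"

definition B_measurable :: "'a set \<Rightarrow> 'a set set \<Rightarrow> ('a \<Rightarrow> ennreal) \<Rightarrow> bool" where
  "B_measurable E B f \<longleftrightarrow> (\<forall>t. t < \<infinity> \<longrightarrow> {x\<in>E. f x > t} \<in> B)"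

definition idem_integral ::
  "(ennreal \<Rightarrow> ennreal \<Rightarrow> ennreal) \<Rightarrow> 'a set \<Rightarrow> ('a \<Rightarrow> ennreal) \<Rightarrow> ('a set \<Rightarrow> ennreal) \<Rightarrow> 'a set \<Rightarrow> ennreal" where
  "idem_integral p E f \<tau> A = (SUP t\<in>{0..<\<infinity>}. p t (\<tau> (A \<inter> {x\<in>E. f x > t})))"

definition pm_abs_cont ::
  "(ennreal \<Rightarrow> ennreal \<Rightarrow> ennreal) \<Rightarrow> 'a set set \<Rightarrow> ('a set \<Rightarrow> ennreal) \<Rightarrow> ('a set \<Rightarrow> ennreal) \<Rightarrow> bool" where
  "pm_abs_cont p B \<nu> \<tau> \<longleftrightarrow> (\<forall>A\<in>B. pm_finite p (\<tau> A) \<longrightarrow> \<nu> A \<le> p \<infinity> (\<tau> A))"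

definition radon_nikodym_property ::
  "(ennreal \<Rightarrow> ennreal \<Rightarrow> ennreal) \<Rightarrow> 'a set \<Rightarrow> 'a set set \<Rightarrow> ('a set \<Rightarrow> ennreal) \<Rightarrow> bool" where
  "radon_nikodym_property p E B \<tau> \<longleftrightarrow>
     (\<forall>\<nu>. sigma_maxitive E B \<nu> \<and> pm_abs_cont p B \<nu> \<tau> \<longrightarrow>
        (\<exists>c. B_measurable E B c \<and> (\<forall>A\<in>B. \<nu> A = idem_integral p E c \<tau> A)))"

end

theory Submission
  imports Defs
begin

text \<open>Suppose \<open>\<tau>(E)\<close> exceeds the supremum \<open>\<phi>\<close> of the \<open>\<odot>\<close>-finite elements and pick
  \<open>\<phi> < y < \<tau>(E)\<close>. Then \<open>y\<close> is \<open>\<odot>\<close>-infinite, so \<open>0 < K < O(y)\<close> for some \<open>K\<close>. The two-valued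
  measure \<open>\<nu>(A) = K\<close> if \<open>\<tau>(A) > y\<close> and \<open>0\<close> otherwise is \<open>\<sigma>\<close>-maxitive, and it is trivially
  \<open>\<odot>\<close>-absolutely continuous, since \<open>\<tau>(A)\<close> can only be \<open>\<odot>\<close>-finite where \<open>\<nu>(A) = 0\<close>.
  Let \<open>c\<close> be its density. The integral vanishes on \<open>{c = 0}\<close>, so \<open>\<tau>({c = 0}) \<le> y\<close>, and
  \<open>\<sigma>\<close>-maxitivity yields a level \<open>t > 0\<close> with \<open>\<tau>({c > t}) > y\<close>. On that set
  \<open>K = \<nu>({c > t}) \<ge> t \<odot> \<tau>({c > t}) \<ge> t \<odot> y \<ge> O(y) > K\<close>.\<close>

lemma ennreal_Ex_inverse_Suc_less:
  assumes "(0::ennreal) < x" shows "\<exists>n::nat. ennreal (1 / Suc n) < x"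
proof (cases x)
  case (real r)
  with assms have "r > 0" by auto
  then obtain n where "inverse (real (Suc n)) < r" using reals_Archimedean by blast
  then have "1 / real (Suc n) < r" by (simp add: field_simps)
  then show ?thesis using real \<open>r > 0\<close> by (intro exI[of _ n]) (simp add: ennreal_lessI)
next
  case top
  then show ?thesis by (intro exI[of _ 0]) simp
qed

lemma sigma_maxitive_less_Union:
  fixes F :: "nat \<Rightarrow> 'a set"
  assumes "sigma_maxitive E B \<tau>" and "range F \<subseteq> B" and "y < \<tau> (\<Union>j. F j)"
  shows "\<exists>j. y < \<tau> (F j)"
proof -
  have "\<tau> (\<Union>j. F j) = (SUP j. \<tau> (F j))"
    using assms(1,2) by (simp add: sigma_maxitive_def)
  with assms(3) show ?thesis by (simp add: less_SUP_iff)
qed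

lemma sigma_maxitive_threshold:
  assumes "sigma_maxitive E B \<tau>"
  shows "sigma_maxitive E B (\<lambda>A. if y < \<tau> A then K else 0)"
  unfolding sigma_maxitive_def
proof (intro conjI allI impI)
  show "(if y < \<tau> {} then K else 0) = 0"
    using assms by (simp add: sigma_maxitive_def)
next
  fix F :: "nat \<Rightarrow> 'a set" assume F: "range F \<subseteq> B"
  have \<tau>_Union: "\<tau> (\<Union>j. F j) = (SUP j. \<tau> (F j))"
    using assms F by (simp add: sigma_maxitive_def)
  show "(if y < \<tau> (\<Union>j. F j) then K else 0) = (SUP j. if y < \<tau> (F j) then K else 0)"
  proof (cases "\<exists>j. y < \<tau> (F j)")
    case True
    then obtain j where j: "y < \<tau> (F j)" ..
    have "(SUP j. if y < \<tau> (F j) then K else 0) = K"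
    proof (rule antisym)
      show "(SUP j. if y < \<tau> (F j) then K else 0) \<le> K"
        by (rule SUP_least) simp
      show "K \<le> (SUP j. if y < \<tau> (F j) then K else 0)"
        by (rule SUP_upper2[of j]) (simp_all add: j)
    qed
    with True show ?thesis by (simp add: \<tau>_Union less_SUP_iff)
  next
    case False
    then show ?thesis by (simp add: \<tau>_Union less_SUP_iff)
  qed
qed

lemma pm_abs_cont_threshold:
  assumes "\<And>t. pm_finite p t \<Longrightarrow> t \<le> y"
  shows "pm_abs_cont p B (\<lambda>A. if y < \<tau> A then K else 0) \<tau>"
  unfolding pm_abs_cont_def by (auto dest!: assms simp: not_less[symmetric])

lemma idem_integral_zero_set:
  assumes "\<tau> {} = 0" and "\<And>t. p t 0 = 0"
  shows "idem_integral p E c \<tau> {x\<in>E. c x = 0} = 0"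
proof -
  have "{x\<in>E. c x = 0} \<inter> {x\<in>E. t < c x} = {}" for t :: ennreal
    by auto
  then show ?thesis using assms by (simp add: idem_integral_def)
qed

lemma idem_integral_level_set_ge:
  assumes "t < \<infinity>"
  shows "p t (\<tau> {x\<in>E. t < c x}) \<le> idem_integral p E c \<tau> {x\<in>E. t < c x}"
  unfolding idem_integral_def using assms by (intro SUP_upper2[of t]) (auto simp: Int_absorb)

lemma B_measurable_level_set:
  "B_measurable E B c \<Longrightarrow> t < \<infinity> \<Longrightarrow> {x\<in>E. t < c x} \<in> B"
  by (simp add: B_measurable_def)

lemma B_measurable_zero_set:
  assumes "sigma_algebra E B" and "B_measurable E B c"
  shows "{x\<in>E. c x = 0} \<in> B"
proof -
  have "{x\<in>E. c x = 0} = E - {x\<in>E. 0 < c x}"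
    by auto
  then show ?thesis
    using algebra.compl_sets[OF sigma_algebra.axioms(1)[OF assms(1)] B_measurable_level_set[OF assms(2)]]
    by simp
qed

lemma sigma_maxitive_positive_level_set:
  assumes "sigma_algebra E B" and "sigma_maxitive E B \<tau>" and "B_measurable E B c"
    and "\<tau> {x\<in>E. c x = 0} \<le> y" and "y < \<tau> E"
  shows "\<exists>t. 0 < t \<and> t < \<infinity> \<and> y < \<tau> {x\<in>E. t < c x}"
proof -
  define L where "L n = {x\<in>E. ennreal (1 / Suc n) < c x}" for n :: nat
  define F where "F = case_nat {x\<in>E. c x = 0} L"
  have "range F \<subseteq> B"
    using B_measurable_zero_set[OF assms(1,3)] B_measurable_level_set[OF assms(3)]
    by (auto simp: F_def L_def split: nat.split)
  moreover have "(\<Union>n. F n) = E"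
  proof -
    have "E \<subseteq> (\<Union>n. F n)"
    proof
      fix x assume x: "x \<in> E"
      show "x \<in> (\<Union>n. F n)"
      proof (cases "c x = 0")
        case True
        with x show ?thesis by (auto simp: F_def intro!: exI[of _ 0])
      next
        case False
        then obtain n where "ennreal (1 / Suc n) < c x"
          using ennreal_Ex_inverse_Suc_less by (auto simp: zero_less_iff_neq_zero)
        with x show ?thesis by (auto simp: F_def L_def intro!: exI[of _ "Suc n"])
      qed
    qed
    then show ?thesis by (auto simp: F_def L_def split: nat.splits)
  qed
  ultimately obtain n where "y < \<tau> (F n)"
    using sigma_maxitive_less_Union[OF assms(2)] assms(5) by metis
  with assms(4) obtain m where "y < \<tau> (L m)"
    by (cases n) (auto simp: F_def)
  then show ?thesis
    unfolding L_def by (intro exI[of _ "ennreal (1 / Suc m)"]) auto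
qed

lemma threshold_density_bound:
  assumes "pseudo_mult p e" and "sigma_algebra E B" and "sigma_maxitive E B \<tau>"
    and "B_measurable E B c" and "0 < K" and "y < \<tau> E"
    and density: "\<And>A. A \<in> B \<Longrightarrow> (if y < \<tau> A then K else 0) = idem_integral p E c \<tau> A"
  shows "pm_O p y \<le> K"
proof -
  have p_mono: "\<And>s t t'. t \<le> t' \<Longrightarrow> p s t \<le> p s t'" and p_zero: "\<And>t. p t 0 = 0"
    using assms(1) unfolding pseudo_mult_def by auto
  from density[OF B_measurable_zero_set[OF assms(2,4)]] have "\<tau> {x\<in>E. c x = 0} \<le> y"
    using idem_integral_zero_set[of \<tau> p E c] assms(3,5) p_zero
    by (auto simp: sigma_maxitive_def split: if_splits)
  then obtain t where t: "0 < t" "t < \<infinity>" and y_less: "y < \<tau> {x\<in>E. t < c x}"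
    using sigma_maxitive_positive_level_set assms(2-4,6) by blast
  have "pm_O p y \<le> p t y"
    unfolding pm_O_def using t by (intro INF_lower) auto
  also have "\<dots> \<le> p t (\<tau> {x\<in>E. t < c x})"
    using y_less by (intro p_mono) simp
  also have "\<dots> \<le> idem_integral p E c \<tau> {x\<in>E. t < c x}"
    using t(2) by (rule idem_integral_level_set_ge)
  also have "\<dots> = K"
    using density[OF B_measurable_level_set[OF assms(4) t(2)]] y_less by simp
  finally show ?thesis .
qed

theorem mainTheorem8:
  fixes p :: "ennreal \<Rightarrow> ennreal \<Rightarrow> ennreal" and e :: ennreal
    and E :: "'a set" and B :: "'a set set" and \<tau> :: "'a set \<Rightarrow> ennreal"
  assumes "pseudo_mult p e" and "non_degenerate p e"
    and "E \<noteq> {}" and "sigma_algebra E B"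
    and "sigma_maxitive E B \<tau>"
    and "radon_nikodym_property p E B \<tau>"
  shows "\<tau> E \<le> Sup {t. pm_finite p t}"
proof (rule ccontr)
  assume "\<not> \<tau> E \<le> Sup {t. pm_finite p t}"
  then obtain y where y_above: "Sup {t. pm_finite p t} < y" and "y < \<tau> E"
    using dense not_le by metis
  have finite_le: "\<And>t. pm_finite p t \<Longrightarrow> t \<le> y"
    using y_above by (metis Sup_upper mem_Collect_eq order.strict_implies_order order_trans)
  have "\<not> pm_finite p y"
    using y_above by (metis Sup_upper mem_Collect_eq leD)
  then have "0 < pm_O p y"
    by (simp add: pm_finite_def zero_less_iff_neq_zero)
  then obtain K where "0 < K" "K < pm_O p y"
    using dense by blast
  obtain c where "B_measurable E B c"
    and "\<And>A. A \<in> B \<Longrightarrow> (if y < \<tau> A then K else 0) = idem_integral p E c \<tau> A"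
    using assms(5,6) sigma_maxitive_threshold pm_abs_cont_threshold[OF finite_le]
    unfolding radon_nikodym_property_def by blast
  then have "pm_O p y \<le> K"
    using threshold_density_bound assms(1,4,5) \<open>0 < K\<close> \<open>y < \<tau> E\<close> by blast
  with \<open>K < pm_O p y\<close> show False by simp
qed

end
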